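(* Let $L, L_{xy},\mu_y, t, r>0$ with $\mu_y\leq L$. Then there exist $n,m$, a function $F\in\mathcal{F}(L, L, L_{xy}, 0, \mu_y)$ on $\mathbb{R}^n\times\mathbb{R}^m$ with a unique saddle point $(x^\star, y^\star)$, and a point $(x^1, y^1)$ with $\|x^1-x^\star\|^2+\|y^1-y^\star\|^2=r^2$, such that the point $x^{2}=x^1-t\nabla_x F(x^1, y^1)$, $y^{2}=y^1+t\nabla_y F(x^1, y^1)$ satisfies $$ \|x^2-x^\star\|^2+\|y^2-y^\star\|^2\geq \alpha\left(\|x^1-x^\star\|^2+\|y^1-y^\star\|^2\right) $$ for some $\alpha\geq 1$.
   Context: $\mathcal{F}(L_x, L_y, L_{xy}, \mu_x, \mu_y)$ (with $\mu_x,\mu_y\ge 0$) denotes the set of differentiable $F:\mathbb{R}^n\times\mathbb{R}^m\to\mathbb{R}$ such that for all $x,x_1,x_2,y,y_1,y_2$: $\|\nabla_x F(x_2, y)-\nabla_x F(x_1, y)\|\leq L_x\|x_2-x_1\|$; $\|\nabla_y F(x, y_2)-\nabla_y F(x, y_1)\|\leq L_y\|y_2-y_1\|$; $\|\nabla_x F(x, y_2)-\nabla_x F(x, y_1)\|\leq L_{xy}\|y_2-y_1\|$; $\|\nabla_y F(x_2, y)-\nabla_y F(x_1, y)\|\leq L_{xy}\|x_2-x_1\|$; $F(\cdot, y)-\tfrac{\mu_x}{2}\|\cdot\|^2$ convex for every $y$ and $F(x,\cdot)+\tfrac{\mu_y}{2}\|\cdot\|^2$ concave for every $x$ (so $\mu_x=0$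 means merely convex in $x$). A saddle point is $(x^\star,y^\star)$ with $F(x^\star, y)\leq F(x^\star, y^\star)\leq F(x, y^\star)$ for all $x,y$. *)

theory Defs
  imports "HOL-Analysis.Analysis"
begin

definition grad_x :: "('a::euclidean_space \<times> 'b::euclidean_space \<Rightarrow> real) \<Rightarrow> 'a \<Rightarrow> 'b \<Rightarrow> 'a" where
  "grad_x F x y = (THE g. ((\<lambda>u. F (u, y)) has_derivative (\<lambda>h. g \<bullet> h)) (at x))"

definition grad_y :: "('a::euclidean_space \<times> 'b::euclidean_space \<Rightarrow> real) \<Rightarrow> 'a \<Rightarrow> 'b \<Rightarrow> 'b" where
  "grad_y F x y = (THE g. ((\<lambda>v. F (x, v)) has_derivative (\<lambda>h. g \<bullet> h)) (at y))"

definition fun_class ::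
  "('a::euclidean_space \<times> 'b::euclidean_space \<Rightarrow> real) \<Rightarrow> real \<Rightarrow> real \<Rightarrow> real \<Rightarrow> real \<Rightarrow> real \<Rightarrow> bool" where
  "fun_class F Lx Ly Lxy mux muy \<longleftrightarrow>
     mux \<ge> 0 \<and> muy \<ge> 0 \<and>
     (\<forall>z. F differentiable (at z)) \<and>
     (\<forall>x1 x2 y. norm (grad_x F x2 y - grad_x F x1 y) \<le> Lx * norm (x2 - x1)) \<and>
     (\<forall>x y1 y2. norm (grad_y F x y2 - grad_y F x y1) \<le> Ly * norm (y2 - y1)) \<and>
     (\<forall>x y1 y2. norm (grad_x F x y2 - grad_x F x y1) \<le> Lxy * norm (y2 - y1)) \<and>
     (\<forall>x1 x2 y. norm (grad_y F x2 y - grad_y F x1 y) \<le> Lxy * norm (x2 - x1)) \<and>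
     (\<forall>y. convex_on UNIV (\<lambda>x. F (x, y) - mux / 2 * (norm x)\<^sup>2)) \<and>
     (\<forall>x. concave_on UNIV (\<lambda>y. F (x, y) + muy / 2 * (norm y)\<^sup>2))"

definition saddle_point :: "('a \<times> 'b \<Rightarrow> real) \<Rightarrow> 'a \<Rightarrow> 'b \<Rightarrow> bool" where
  "saddle_point F xs ys \<longleftrightarrow> (\<forall>x y. F (xs, y) \<le> F (xs, ys) \<and> F (xs, ys) \<le> F (x, ys))"

end

theory Submission
  imports Defs
begin

text \<open>
  Take \<open>F(x, y) = e/2 \<parallel>x\<parallel>\<^sup>2 + a (u \<bullet> x)(v \<bullet> y) - \<mu>/2 \<parallel>y\<parallel>\<^sup>2\<close> with unit vectors \<open>u, v\<close>,
  coupling \<open>a = L\<^sub>x\<^sub>y\<close> and curvature \<open>e = min L (t a\<^sup>2/2)\<close>. Its only saddle point is the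
  origin, and one gradient descent-ascent step from \<open>(r u, 0)\<close> lands at
  \<open>((1 - t e) r u, t a r v)\<close>, whose squared distance to the origin is
  \<open>((1 - t e)\<^sup>2 + t\<^sup>2 a\<^sup>2) r\<^sup>2 \<ge> r\<^sup>2\<close>: the rotation caused by the coupling outweighs the
  contraction \<open>2 t e \<le> t\<^sup>2 a\<^sup>2\<close> caused by the weak convexity in \<open>x\<close>.
\<close>

lemma gradient_unique:
  fixes g :: "'a::real_inner"
  assumes "(f has_derivative (\<lambda>h. g \<bullet> h)) (at x)"
  shows "(THE g. (f has_derivative (\<lambda>h. g \<bullet> h)) (at x)) = g"
proof (rule the_equality)
  fix g' assume "(f has_derivative (\<lambda>h. g' \<bullet> h)) (at x)"
  from has_derivative_unique[OF this assms] have "\<And>h. g' \<bullet> h = g \<bullet> h"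
    by metis
  from this[of "g' - g"] have "(g' - g) \<bullet> (g' - g) = 0"
    by (simp add: inner_diff inner_commute)
  then show "g' = g"
    by simp
qed (rule assms)

lemma grad_x_eqI:
  "((\<lambda>x. F (x, y)) has_derivative (\<lambda>h. g \<bullet> h)) (at x) \<Longrightarrow> grad_x F x y = g"
  unfolding grad_x_def by (rule gradient_unique)

lemma grad_y_eqI:
  "((\<lambda>y. F (x, y)) has_derivative (\<lambda>h. g \<bullet> h)) (at y) \<Longrightarrow> grad_y F x y = g"
  unfolding grad_y_def by (rule gradient_unique)

lemma convex_on_linear:
  fixes f :: "'a::real_vector \<Rightarrow> real"
  assumes "linear f" and "convex S"
  shows "convex_on S f"
  using assms by (simp add: convex_on_def linear_add linear_scale)

lemma concave_on_linear:
  fixes f :: "'a::real_vector \<Rightarrow> real"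
  assumes "linear f" and "convex S"
  shows "concave_on S f"
  using assms by (simp add: concave_on_iff linear_add linear_scale)

lemma convex_on_power2_norm:
  "convex_on UNIV (\<lambda>x::'a::real_inner. (norm x)\<^sup>2)"
proof (rule convex_onI)
  fix t :: real and x y :: 'a
  assume t: "0 < t" "t < 1"
  have "(1 - t) * (norm x)\<^sup>2 + t * (norm y)\<^sup>2 - (norm ((1 - t) *\<^sub>R x + t *\<^sub>R y))\<^sup>2
      = t * (1 - t) * (norm (x - y))\<^sup>2"
    by (simp add: power2_norm_eq_inner inner_add inner_diff inner_commute algebra_simps)
  also have "\<dots> \<ge> 0"
    using t by simp
  finally show "(norm ((1 - t) *\<^sub>R x + t *\<^sub>R y))\<^sup>2 \<le> (1 - t) * (norm x)\<^sup>2 + t * (norm y)\<^sup>2"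
    by simp
qed simp

lemma norm_scaleR_inner_le:
  fixes w h :: "'a::real_inner" and w' :: "'b::real_normed_vector"
  assumes "norm w \<le> 1" "norm w' \<le> 1"
  shows "norm ((c * (w \<bullet> h)) *\<^sub>R w') \<le> \<bar>c\<bar> * norm h"
proof -
  have "norm ((c * (w \<bullet> h)) *\<^sub>R w') \<le> \<bar>c\<bar> * \<bar>w \<bullet> h\<bar>"
    using assms(2) by (simp add: abs_mult mult_left_le)
  also have "\<bar>w \<bullet> h\<bar> \<le> norm h"
    using Cauchy_Schwarz_ineq2[of w h] mult_right_mono[OF assms(1) norm_ge_zero[of h]] by simp
  finally show ?thesis
    by (simp add: mult_left_mono)
qed

definition coupled_quadratic ::
  "real \<Rightarrow> real \<Rightarrow> real \<Rightarrow> 'a::real_inner \<Rightarrow> 'b::real_inner \<Rightarrow> 'a \<times> 'b \<Rightarrow> real" where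
  "coupled_quadratic e a \<mu> u v z =
     e / 2 * (norm (fst z))\<^sup>2 + a * (u \<bullet> fst z) * (v \<bullet> snd z) - \<mu> / 2 * (norm (snd z))\<^sup>2"

context
  fixes e a \<mu> :: real and u :: "'a::euclidean_space" and v :: "'b::euclidean_space"
begin

private abbreviation "F \<equiv> coupled_quadratic e a \<mu> u v"

lemma grad_x_coupled_quadratic: "grad_x F x y = e *\<^sub>R x + (a * (v \<bullet> y)) *\<^sub>R u"
  by (rule grad_x_eqI)
    (auto intro!: derivative_eq_intros
      simp: coupled_quadratic_def power2_norm_eq_inner algebra_simps inner_add inner_commute)

lemma grad_y_coupled_quadratic: "grad_y F x y = (a * (u \<bullet> x)) *\<^sub>R v - \<mu> *\<^sub>R y"
  by (rule grad_y_eqI)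
    (auto intro!: derivative_eq_intros
      simp: coupled_quadratic_def power2_norm_eq_inner algebra_simps inner_diff inner_commute)

lemma coupled_quadratic_fun_class:
  assumes "0 \<le> mux" "mux \<le> e" "e \<le> Lx" "0 \<le> \<mu>" "\<mu> \<le> Ly" "\<bar>a\<bar> \<le> Lxy"
    and "norm u \<le> 1" "norm v \<le> 1"
  shows "fun_class F Lx Ly Lxy mux \<mu>"
  unfolding fun_class_def
proof (intro conjI allI)
  fix x x1 x2 :: 'a and y y1 y2 :: 'b and z :: "'a \<times> 'b"
  show "F differentiable (at z)"
    unfolding differentiable_def coupled_quadratic_def[abs_def] power2_norm_eq_inner
    by (rule exI, (rule derivative_intros)+)
  show "norm (grad_x F x2 y - grad_x F x1 y) \<le> Lx * norm (x2 - x1)"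
    using assms
    by (auto simp: grad_x_coupled_quadratic algebra_simps
        simp flip: scaleR_diff_right intro!: mult_right_mono)
  show "norm (grad_y F x y2 - grad_y F x y1) \<le> Ly * norm (y2 - y1)"
    using assms
    by (auto simp: grad_y_coupled_quadratic algebra_simps norm_minus_commute
        simp flip: scaleR_diff_right intro!: mult_right_mono)
  have "grad_x F x y2 - grad_x F x y1 = (a * (v \<bullet> (y2 - y1))) *\<^sub>R u"
    by (simp add: grad_x_coupled_quadratic inner_diff_right algebra_simps)
  then show "norm (grad_x F x y2 - grad_x F x y1) \<le> Lxy * norm (y2 - y1)"
    using norm_scaleR_inner_le[of v u a "y2 - y1"] mult_right_mono[OF assms(6) norm_ge_zero] assms(7,8)
    by (metis order_trans)
  have "grad_y F x2 y - grad_y F x1 y = (a * (u \<bullet> (x2 - x1))) *\<^sub>R v"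
    by (simp add: grad_y_coupled_quadratic inner_diff_right algebra_simps)
  then show "norm (grad_y F x2 y - grad_y F x1 y) \<le> Lxy * norm (x2 - x1)"
    using norm_scaleR_inner_le[of u v a "x2 - x1"] mult_right_mono[OF assms(6) norm_ge_zero] assms(7,8)
    by (metis order_trans)
  have "convex_on UNIV (\<lambda>x. (e - mux) / 2 * (norm x)\<^sup>2 + (a * (v \<bullet> y)) * (u \<bullet> x)
                            - \<mu> / 2 * (norm y)\<^sup>2)"
    using assms
    by (intro convex_on_diff[OF convex_on_add[OF convex_on_cmul[OF _ convex_on_power2_norm]
          convex_on_linear]])
      (auto simp: concave_on_const linear_iff inner_add_right algebra_simps)
  then show "convex_on UNIV (\<lambda>x. F (x, y) - mux / 2 * (norm x)\<^sup>2)"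
    by (simp add: coupled_quadratic_def algebra_simps diff_divide_distrib)
  have "concave_on UNIV (\<lambda>y. e / 2 * (norm x)\<^sup>2 + (a * (u \<bullet> x)) * (v \<bullet> y))"
    by (intro concave_on_add[OF _ concave_on_linear])
      (auto simp: concave_on_const linear_iff inner_add_right algebra_simps)
  then show "concave_on UNIV (\<lambda>y. F (x, y) + \<mu> / 2 * (norm y)\<^sup>2)"
    by (simp add: coupled_quadratic_def algebra_simps)
qed (use assms in auto)

lemma saddle_point_coupled_quadratic_iff:
  assumes "0 < e" "0 < \<mu>"
  shows "saddle_point F x y \<longleftrightarrow> x = 0 \<and> y = 0"
proof
  assume "saddle_point F x y"
  then have "F (x, 0) \<le> F (x, y)" "F (x, y) \<le> F (0, y)"
    unfolding saddle_point_def by blast+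
  then have "e / 2 * (norm x)\<^sup>2 + \<mu> / 2 * (norm y)\<^sup>2 \<le> 0"
    by (simp add: coupled_quadratic_def)
  moreover have "0 \<le> e / 2 * (norm x)\<^sup>2" "0 \<le> \<mu> / 2 * (norm y)\<^sup>2"
    using assms by simp_all
  ultimately have "e / 2 * (norm x)\<^sup>2 = 0" "\<mu> / 2 * (norm y)\<^sup>2 = 0"
    by linarith+
  then show "x = 0 \<and> y = 0"
    using assms by simp
qed (use assms in \<open>simp add: saddle_point_def coupled_quadratic_def\<close>)

lemma gda_step_coupled_quadratic:
  assumes "norm u = 1" "norm v = 1"
  shows "(norm (r *\<^sub>R u - t *\<^sub>R grad_x F (r *\<^sub>R u) 0))\<^sup>2 + (norm (t *\<^sub>R grad_y F (r *\<^sub>R u) 0))\<^sup>2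
       = ((1 - t * e)\<^sup>2 + (t * a)\<^sup>2) * r\<^sup>2"
proof -
  have "u \<bullet> u = 1"
    using assms(1) by (simp add: norm_eq_1)
  then have x2: "r *\<^sub>R u - t *\<^sub>R grad_x F (r *\<^sub>R u) 0 = ((1 - t * e) * r) *\<^sub>R u"
    and y2: "t *\<^sub>R grad_y F (r *\<^sub>R u) 0 = (t * a * r) *\<^sub>R v"
    by (simp_all add: grad_x_coupled_quadratic grad_y_coupled_quadratic algebra_simps)
  show ?thesis
    unfolding x2 y2 using assms by (simp add: power_mult_distrib distrib_right)
qed

end

lemma one_le_gda_expansion_factor:
  fixes t e a :: real
  assumes "0 \<le> t" "e \<le> t * a\<^sup>2 / 2"
  shows "1 \<le> (1 - t * e)\<^sup>2 + (t * a)\<^sup>2"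
proof -
  have "t * e \<le> t * (t * a\<^sup>2 / 2)"
    by (rule mult_left_mono[OF assms(2) assms(1)])
  moreover have "t * (t * a\<^sup>2 / 2) = (t * a)\<^sup>2 / 2"
    by (simp add: power2_eq_square)
  moreover have "(1 - t * e)\<^sup>2 = 1 - 2 * (t * e) + (t * e)\<^sup>2"
    by (simp add: power2_eq_square algebra_simps)
  ultimately show ?thesis
    using zero_le_power2[of "t * e"] by linarith
qed

theorem proposition2p5:
  fixes L Lxy muy t r :: real
  assumes "L > 0" and "Lxy > 0" and "muy > 0" and "t > 0" and "r > 0" and "muy \<le> L"
  shows "\<exists>(F :: (real^'n) \<times> (real^'m) \<Rightarrow> real) xs ys x1 y1.
           fun_class F L L Lxy 0 muy \<and>
           saddle_point F xs ys \<and>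
           (\<forall>a b. saddle_point F a b \<longrightarrow> a = xs \<and> b = ys) \<and>
           (norm (x1 - xs))\<^sup>2 + (norm (y1 - ys))\<^sup>2 = r\<^sup>2 \<and>
           (let x2 = x1 - t *\<^sub>R grad_x F x1 y1;
                y2 = y1 + t *\<^sub>R grad_y F x1 y1
            in \<exists>\<alpha>\<ge>1. (norm (x2 - xs))\<^sup>2 + (norm (y2 - ys))\<^sup>2
                        \<ge> \<alpha> * ((norm (x1 - xs))\<^sup>2 + (norm (y1 - ys))\<^sup>2))"
proof -
  define e where "e = min L (t * Lxy\<^sup>2 / 2)"
  define u :: "real^'n" where "u = axis undefined 1"
  define v :: "real^'m" where "v = axis undefined 1"
  define F where "F = coupled_quadratic e Lxy muy u v"
  have "0 < e"
    using assms by (simp add: e_def)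
  have "fun_class F L L Lxy 0 muy"
    unfolding F_def using assms \<open>0 < e\<close>
    by (intro coupled_quadratic_fun_class) (auto simp: e_def u_def v_def)
  moreover have "saddle_point F x y \<longleftrightarrow> x = 0 \<and> y = 0" for x y
    unfolding F_def using \<open>0 < e\<close> \<open>muy > 0\<close> by (rule saddle_point_coupled_quadratic_iff)
  moreover have "(norm (r *\<^sub>R u))\<^sup>2 = r\<^sup>2"
    by (simp add: u_def)
  moreover have "1 \<le> (1 - t * e)\<^sup>2 + (t * Lxy)\<^sup>2"
    using assms by (intro one_le_gda_expansion_factor) (auto simp: e_def)
  moreover have "(norm (r *\<^sub>R u - t *\<^sub>R grad_x F (r *\<^sub>R u) 0))\<^sup>2
      + (norm (t *\<^sub>R grad_y F (r *\<^sub>R u) 0))\<^sup>2 = ((1 - t * e)\<^sup>2 + (t * Lxy)\<^sup>2) * r\<^sup>2"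
    unfolding F_def by (rule gda_step_coupled_quadratic) (simp_all add: u_def v_def)
  ultimately show ?thesis
    by (intro exI[of _ F] exI[of _ 0] exI[of _ "r *\<^sub>R u"]) (auto simp: Let_def)
qed

end
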